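(* Let $G^\sigma$ be a lower-optimal oriented graph, let $y$ be a pendant vertex of $G$ with neighbor $x$, and let $H^\sigma=G^\sigma-y-x$. Then (i) $x$ does not lie on any cycle of $G$; (ii) $H^\sigma$ is lower-optimal.
   Context: An oriented graph $G^\sigma$ is obtained from a simple graph $G$ by assigning a direction to each edge. Its skew-adjacency matrix $S(G^\sigma)=[s_{x,y}]$ has $s_{x,y}=1$ if there is an arc from $x$ to $y$, $s_{x,y}=-1$ if there is an arc from $y$ to $x$, and $0$ otherwise; $sr(G^\sigma)$ is the rank of $S(G^\sigma)$. $\alpha(\cdot)$ is the independence number of the underlying graph. $d(G)=|E_G|-|V_G|+\omega(G)$, with $\omega(G)$ the number of components. For every oriented graph one has $sr(G^\sigma)+2\alpha(G)\geqslant 2|V_G|-2d(G)$, and $G^\sigma$ is called lower-optimal if equality holds. A pendant vertex has degree one. *)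

theory Defs
  imports "Jordan_Normal_Form.DL_Rank"
begin

definition oriented_graph :: "'a set \<Rightarrow> ('a \<times> 'a) set \<Rightarrow> bool" where
  "oriented_graph V A \<longleftrightarrow> finite V \<and> A \<subseteq> V \<times> V \<and>
     (\<forall>u. (u,u) \<notin> A) \<and> (\<forall>u v. (u,v) \<in> A \<longrightarrow> (v,u) \<notin> A)"

definition adj :: "('a \<times> 'a) set \<Rightarrow> 'a \<Rightarrow> 'a \<Rightarrow> bool" where
  "adj A u v \<longleftrightarrow> (u,v) \<in> A \<or> (v,u) \<in> A"

definition degree :: "'a set \<Rightarrow> ('a \<times> 'a) set \<Rightarrow> 'a \<Rightarrow> nat" where
  "degree V A u = card {v \<in> V. adj A u v}"

definition pendant :: "'a set \<Rightarrow> ('a \<times> 'a) set \<Rightarrow> 'a \<Rightarrow> bool" where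
  "pendant V A u \<longleftrightarrow> u \<in> V \<and> degree V A u = 1"

definition skew_entry :: "('a \<times> 'a) set \<Rightarrow> 'a \<Rightarrow> 'a \<Rightarrow> real" where
  "skew_entry A u v = (if (u,v) \<in> A then 1 else if (v,u) \<in> A then -1 else 0)"

definition skew_adj_mat :: "'a::linorder set \<Rightarrow> ('a \<times> 'a) set \<Rightarrow> real mat" where
  "skew_adj_mat V A = mat (card V) (card V)
     (\<lambda>(i,j). skew_entry A (sorted_list_of_set V ! i) (sorted_list_of_set V ! j))"

definition skew_rank :: "'a::linorder set \<Rightarrow> ('a \<times> 'a) set \<Rightarrow> nat" where
  "skew_rank V A = vec_space.rank (card V) (skew_adj_mat V A)"

definition independent_set :: "'a set \<Rightarrow> ('a \<times> 'a) set \<Rightarrow> 'a set \<Rightarrow> bool" where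
  "independent_set V A S \<longleftrightarrow> S \<subseteq> V \<and> (\<forall>u\<in>S. \<forall>v\<in>S. \<not> adj A u v)"

definition independence_number :: "'a set \<Rightarrow> ('a \<times> 'a) set \<Rightarrow> nat" where
  "independence_number V A = Max (card ` {S. independent_set V A S})"

definition edges :: "('a \<times> 'a) set \<Rightarrow> 'a set set" where
  "edges A = {{u, v} | u v. (u,v) \<in> A}"

definition connected_in :: "'a set \<Rightarrow> ('a \<times> 'a) set \<Rightarrow> 'a \<Rightarrow> 'a \<Rightarrow> bool" where
  "connected_in V A = (\<lambda>u v. u \<in> V \<and> v \<in> V \<and> adj A u v)\<^sup>*\<^sup>*"

definition num_components :: "'a set \<Rightarrow> ('a \<times> 'a) set \<Rightarrow> nat" where
  "num_components V A = card (V // {(u,v). u \<in> V \<and> v \<in> V \<and> connected_in V A u v})"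

definition dim_d :: "'a set \<Rightarrow> ('a \<times> 'a) set \<Rightarrow> int" where
  "dim_d V A = int (card (edges A)) - int (card V) + int (num_components V A)"

definition lower_optimal :: "'a::linorder set \<Rightarrow> ('a \<times> 'a) set \<Rightarrow> bool" where
  "lower_optimal V A \<longleftrightarrow>
     int (skew_rank V A) + 2 * int (independence_number V A) = 2 * int (card V) - 2 * dim_d V A"

definition on_cycle :: "'a set \<Rightarrow> ('a \<times> 'a) set \<Rightarrow> 'a \<Rightarrow> bool" where
  "on_cycle V A x \<longleftrightarrow> (\<exists>cs. length cs \<ge> 3 \<and> distinct cs \<and> set cs \<subseteq> V \<and> x \<in> set cs \<and>
      (\<forall>i < length cs. adj A (cs ! i) (cs ! ((i + 1) mod length cs))))"

definition del_verts_arcs :: "'a set \<Rightarrow> ('a \<times> 'a) set \<Rightarrow> 'a set \<Rightarrow> ('a \<times> 'a) set" where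
  "del_verts_arcs V A D = A \<inter> ((V - D) \<times> (V - D))"

end

theory Submission
  imports Defs
begin

(*
  Write H = G - y - x and call sr + 2\<alpha> - 2|V| + 2d the excess of an oriented graph.
  Deleting the pendant edge yx lowers sr by at least 2 (row y of the skew-adjacency matrix
  isolates column x, then row x isolates column y), lowers \<alpha> by at least 1 (y extends any
  independent set of H), lowers |V| by exactly 2 and does not raise d.  Hence
  excess H + 2 (d G - d H) \<le> excess G.  The excess is nonnegative for every oriented graph:
  a longest path shows that some vertex is isolated, pendant or on a cycle, and deleting it
  (with its neighbour, if pendant) does not raise the excess.  So excess G = 0 forces
  excess H = 0 and d H = d G, while a cycle through x would make d drop when x is deleted.
*)

lemma adj_commute: "adj A u v \<longleftrightarrow> adj A v u"
  unfolding adj_def by auto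

lemma oriented_graph_adjD:
  "oriented_graph V A \<Longrightarrow> adj A u v \<Longrightarrow> u \<in> V \<and> v \<in> V \<and> u \<noteq> v"
  unfolding oriented_graph_def adj_def by auto

lemma oriented_graph_del_verts:
  "oriented_graph V A \<Longrightarrow> oriented_graph (V - D) (del_verts_arcs V A D)"
  unfolding oriented_graph_def del_verts_arcs_def by auto

lemma adj_del_verts_arcs:
  "oriented_graph V A \<Longrightarrow>
     adj (del_verts_arcs V A D) u v \<longleftrightarrow> adj A u v \<and> u \<in> V - D \<and> v \<in> V - D"
  unfolding oriented_graph_def del_verts_arcs_def adj_def by auto

lemma pendant_neighbour_unique:
  assumes "oriented_graph V A" and "pendant V A y" and "adj A y x" and "adj A y u"
  shows "u = x"
proof -
  have "card {w \<in> V. adj A y w} = 1" using assms(2) unfolding pendant_def degree_def by simp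
  then obtain z where z: "{w \<in> V. adj A y w} = {z}" by (rule card_1_singletonE)
  moreover have "x \<in> {w \<in> V. adj A y w}" "u \<in> {w \<in> V. adj A y w}"
    using assms(3,4) oriented_graph_adjD[OF assms(1)] by simp_all
  ultimately show ?thesis by simp
qed

section \<open>Components and the cyclomatic number d\<close>

definition component_rel :: "'a set \<Rightarrow> ('a \<times> 'a) set \<Rightarrow> ('a \<times> 'a) set" where
  "component_rel V A = {(u,v). u \<in> V \<and> v \<in> V \<and> connected_in V A u v}"

lemma connected_in_sym:
  assumes "connected_in V A u v"
  shows "connected_in V A v u"
proof -
  let ?r = "\<lambda>a b. a \<in> V \<and> b \<in> V \<and> adj A a b"
  have sym: "?r\<inverse>\<inverse> = ?r"
    by (auto simp: fun_eq_iff adj_def)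
  have "(?r\<inverse>\<inverse>)\<^sup>*\<^sup>* v u"
    using assms unfolding connected_in_def by (rule rtranclp_converseI)
  then show ?thesis
    unfolding connected_in_def sym .
qed

lemma equiv_component_rel: "equiv V (component_rel V A)"
proof (rule equivI)
  show "component_rel V A \<subseteq> V \<times> V"
    unfolding component_rel_def by auto
  show "refl_on V (component_rel V A)"
    unfolding refl_on_def component_rel_def connected_in_def by auto
  show "sym (component_rel V A)"
    unfolding sym_def component_rel_def by (auto intro: connected_in_sym)
  show "trans (component_rel V A)"
    unfolding trans_def component_rel_def connected_in_def by (auto intro: rtranclp_trans)
qed

lemma num_components_eq_card_quotient: "num_components V A = card (V // component_rel V A)"
  unfolding num_components_def component_rel_def by simp

lemma connected_in_walk:
  assumes "\<And>i. i < k \<Longrightarrow> f i \<in> W \<and> f (Suc i) \<in> W \<and> adj B (f i) (f (Suc i))"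
  shows "connected_in W B (f 0) (f k)"
  using assms unfolding connected_in_def
  by (induction k) (auto intro: rtranclp.rtrancl_into_rtrancl)

lemma connected_in_del_verts_imp:
  assumes "oriented_graph V A" and "connected_in (V - D) (del_verts_arcs V A D) u w"
  shows "connected_in V A u w"
  using assms(2) unfolding connected_in_def
  by (rule mono_rtranclp[rule_format, rotated]) (auto simp: adj_del_verts_arcs[OF assms(1)])

lemma connected_in_del_vertex_step:
  assumes "oriented_graph V A" and "connected_in (V - {v}) (del_verts_arcs V A {v}) u w"
    and "adj A w z" and "w \<noteq> v" and "z \<noteq> v"
  shows "connected_in (V - {v}) (del_verts_arcs V A {v}) u z"
  using assms oriented_graph_adjD[OF assms(1,3)] unfolding connected_in_def
  by (auto intro: rtranclp.rtrancl_into_rtrancl simp: adj_del_verts_arcs[OF assms(1)])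

lemma connected_in_del_vertex_cases:
  assumes og: "oriented_graph V A" and "connected_in V A u w" and u: "u \<in> V - {v}"
  shows "(w \<noteq> v \<and> connected_in (V - {v}) (del_verts_arcs V A {v}) u w) \<or>
         (\<exists>n. adj A v n \<and> connected_in (V - {v}) (del_verts_arcs V A {v}) u n)"
proof -
  have "(\<lambda>a b. a \<in> V \<and> b \<in> V \<and> adj A a b)\<^sup>*\<^sup>* u w"
    using assms(2) unfolding connected_in_def .
  then show ?thesis
  proof (induction rule: rtranclp_induct)
    case base
    then show ?case using u by (simp add: connected_in_def)
  next
    case (step z z')
    then have zz': "adj A z z'" by simp
    from step.IH show ?case
    proof (elim disjE conjE)
      assume z: "z \<noteq> v" and uz: "connected_in (V - {v}) (del_verts_arcs V A {v}) u z"
      show ?thesis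
      proof (cases "z' = v")
        case True
        then show ?thesis using zz' uz adj_commute by metis
      next
        case False
        then show ?thesis using connected_in_del_vertex_step[OF og uz zz' z] by blast
      qed
    qed (rule disjI2)
  qed
qed

lemma component_del_vertex_eq:
  assumes og: "oriented_graph V A" and c: "c \<in> V - {v}"
    and isolated: "\<And>n. adj A v n \<Longrightarrow> \<not> connected_in (V - {v}) (del_verts_arcs V A {v}) c n"
  shows "component_rel V A `` {c} = component_rel (V - {v}) (del_verts_arcs V A {v}) `` {c}"
proof -
  have "w \<noteq> v \<and> connected_in (V - {v}) (del_verts_arcs V A {v}) c w" if "connected_in V A c w" for w
    using connected_in_del_vertex_cases[OF og that c] isolated by blast
  moreover have "connected_in V A c w" if "connected_in (V - {v}) (del_verts_arcs V A {v}) c w" for w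
    using connected_in_del_verts_imp[OF og that] .
  ultimately show ?thesis
    using c unfolding component_rel_def by fast
qed

text \<open>Deleting v splits v's component into at most as many pieces as there are components of
  G - v meeting the neighbourhood of v; all other components survive unchanged.\<close>

lemma num_components_del_vertex:
  assumes og: "oriented_graph V A" and v: "v \<in> V"
  shows "num_components (V - {v}) (del_verts_arcs V A {v}) + 1 \<le> num_components V A +
           card ((\<lambda>n. component_rel (V - {v}) (del_verts_arcs V A {v}) `` {n}) ` {w \<in> V. adj A v w})"
    (is "_ \<le> _ + card (?cls ` ?N)")
proof -
  define R where "R = component_rel V A"
  define R' where "R' = component_rel (V - {v}) (del_verts_arcs V A {v})"
  define S where "S = {C \<in> (V - {v}) // R'. C \<inter> ?N \<noteq> {}}"
  have finV: "finite V" using og unfolding oriented_graph_def by simp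
  have eqR: "equiv V R" and eqR': "equiv (V - {v}) R'"
    unfolding R_def R'_def by (rule equiv_component_rel)+
  have finQ: "finite (V // R)" and finQ': "finite ((V - {v}) // R')"
    using finV finite_quotient equiv_type[OF eqR] equiv_type[OF eqR'] by blast+
  have "S \<subseteq> ?cls ` ?N"
  proof
    fix C assume "C \<in> S"
    then obtain c n where "c \<in> V - {v}" "C = R' `` {c}" "n \<in> C" "n \<in> ?N"
      unfolding S_def by (auto elim!: quotientE)
    then show "C \<in> ?cls ` ?N" unfolding R'_def using equiv_class_eq[OF eqR'[unfolded R'_def]] by auto
  qed
  then have S: "card S \<le> card (?cls ` ?N)" using finV by (intro card_mono) auto
  have "(V - {v}) // R' - S \<subseteq> V // R - {R `` {v}}"
  proof
    fix C assume C: "C \<in> (V - {v}) // R' - S"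
    then obtain c where c: "c \<in> V - {v}" "C = R' `` {c}" by (auto elim!: quotientE)
    have "\<not> connected_in (V - {v}) (del_verts_arcs V A {v}) c n" if "adj A v n" for n
      using C c that oriented_graph_adjD[OF og that] unfolding S_def R'_def component_rel_def by auto
    then have "C = R `` {c}" using component_del_vertex_eq[OF og c(1)] c(2) unfolding R_def R'_def by auto
    moreover have "v \<notin> C" using c equiv_type[OF eqR'] by auto
    ultimately show "C \<in> V // R - {R `` {v}}"
      using c(1) v equiv_class_self[OF eqR v] by (auto intro: quotientI)
  qed
  then have "card ((V - {v}) // R' - S) \<le> card (V // R - {R `` {v}})"
    using finQ by (intro card_mono) auto
  moreover have "R `` {v} \<in> V // R" using v by (rule quotientI)
  then have "card (V // R - {R `` {v}}) + 1 = card (V // R)"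
    using finQ card.remove by fastforce
  moreover have "card ((V - {v}) // R') = card ((V - {v}) // R' - S) + card S"
    using finQ' card_Diff_subset[of S "(V - {v}) // R'"] card_mono[of "(V - {v}) // R'" S]
    unfolding S_def by (auto intro: finite_subset)
  ultimately show ?thesis
    using S unfolding num_components_eq_card_quotient R_def R'_def by linarith
qed

lemma finite_edges:
  assumes "oriented_graph V A"
  shows "finite (edges A)"
proof -
  have "edges A = (\<lambda>(u, w). {u, w}) ` A" unfolding edges_def by auto
  moreover have "finite A"
    using assms finite_subset[of A "V \<times> V"] unfolding oriented_graph_def by auto
  ultimately show ?thesis by simp
qed

lemma edges_del_vertex:
  assumes og: "oriented_graph V A"
  shows "edges (del_verts_arcs V A {v}) = {e \<in> edges A. v \<notin> e}"
proof (intro equalityI subsetI)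
  fix e assume "e \<in> {e \<in> edges A. v \<notin> e}"
  then obtain u w where "e = {u, w}" "(u, w) \<in> A" "v \<notin> e" unfolding edges_def by blast
  then show "e \<in> edges (del_verts_arcs V A {v})"
    using og unfolding oriented_graph_def edges_def del_verts_arcs_def by blast
qed (auto simp: edges_def del_verts_arcs_def)

lemma edges_incident_eq_image:
  assumes og: "oriented_graph V A"
  shows "{e \<in> edges A. v \<in> e} = (\<lambda>w. {v, w}) ` {w \<in> V. adj A v w}"
proof (intro equalityI subsetI)
  fix e assume "e \<in> {e \<in> edges A. v \<in> e}"
  then obtain u w where e: "e = {u, w}" "(u, w) \<in> A" "v \<in> e" unfolding edges_def by blast
  then have "u \<in> V" "w \<in> V" using og unfolding oriented_graph_def by auto
  consider "v = u" | "v = w" using e by blast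
  then show "e \<in> (\<lambda>w. {v, w}) ` {w \<in> V. adj A v w}"
  proof cases
    case 1
    then show ?thesis using e \<open>w \<in> V\<close> unfolding adj_def by blast
  next
    case 2
    then have "e = {v, u}" using e by (simp add: insert_commute)
    then show ?thesis using e 2 \<open>u \<in> V\<close> unfolding adj_def by blast
  qed
next
  fix e assume "e \<in> (\<lambda>w. {v, w}) ` {w \<in> V. adj A v w}"
  then obtain w where e: "e = {v, w}" and "(v, w) \<in> A \<or> (w, v) \<in> A"
    unfolding adj_def by blast
  moreover have "{w, v} = {v, w}" by blast
  ultimately show "e \<in> {e \<in> edges A. v \<in> e}" unfolding edges_def by blast
qed

lemma card_edges_del_vertex:
  assumes og: "oriented_graph V A"
  shows "card (edges (del_verts_arcs V A {v})) + degree V A v = card (edges A)"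
proof -
  have "inj_on (\<lambda>w. {v, w}) {w \<in> V. adj A v w}"
    using oriented_graph_adjD[OF og] unfolding inj_on_def by (auto simp: doubleton_eq_iff)
  then have incident: "card {e \<in> edges A. v \<in> e} = degree V A v"
    unfolding edges_incident_eq_image[OF og] degree_def by (rule card_image)
  have "edges A = {e \<in> edges A. v \<notin> e} \<union> {e \<in> edges A. v \<in> e}"
    and "{e \<in> edges A. v \<notin> e} \<inter> {e \<in> edges A. v \<in> e} = {}" by blast+
  then have "card (edges A) = card {e \<in> edges A. v \<notin> e} + card {e \<in> edges A. v \<in> e}"
    using finite_edges[OF og] card_Un_disjoint[of "{e \<in> edges A. v \<notin> e}" "{e \<in> edges A. v \<in> e}"]
    by simp
  then show ?thesis unfolding edges_del_vertex[OF og] incident by simp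
qed

lemma dim_d_del_vertex_bound:
  assumes og: "oriented_graph V A" and v: "v \<in> V"
  shows "dim_d (V - {v}) (del_verts_arcs V A {v}) + int (degree V A v) \<le> dim_d V A +
           int (card ((\<lambda>n. component_rel (V - {v}) (del_verts_arcs V A {v}) `` {n}) ` {w \<in> V. adj A v w}))"
proof -
  have "finite V" using og unfolding oriented_graph_def by simp
  then have "card (V - {v}) + 1 = card V" using v by (metis card_Suc_Diff1 Suc_eq_plus1)
  then show ?thesis
    using num_components_del_vertex[OF og v] card_edges_del_vertex[OF og, of v] unfolding dim_d_def by linarith
qed

lemma dim_d_del_vertex_le:
  assumes og: "oriented_graph V A" and v: "v \<in> V"
  shows "dim_d (V - {v}) (del_verts_arcs V A {v}) \<le> dim_d V A"
proof -
  have "finite V" using og unfolding oriented_graph_def by simp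
  then have "card ((\<lambda>n. component_rel (V - {v}) (del_verts_arcs V A {v}) `` {n}) ` {w \<in> V. adj A v w})
      \<le> degree V A v"
    unfolding degree_def by (intro card_image_le) simp
  then show ?thesis using dim_d_del_vertex_bound[OF og v] by linarith
qed

lemma on_cycle_rotated:
  assumes "on_cycle V A v"
  obtains cs where "length cs \<ge> 3" "distinct cs" "set cs \<subseteq> V" "cs ! 0 = v"
    "\<And>i. i < length cs \<Longrightarrow> adj A (cs ! i) (cs ! ((i + 1) mod length cs))"
proof -
  obtain cs where cs: "length cs \<ge> 3" "distinct cs" "set cs \<subseteq> V" "v \<in> set cs"
    and adj: "\<And>i. i < length cs \<Longrightarrow> adj A (cs ! i) (cs ! ((i + 1) mod length cs))"
    using assms unfolding on_cycle_def by blast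
  obtain j where j: "j < length cs" "cs ! j = v" using cs(4) by (metis in_set_conv_nth)
  let ?L = "length cs"
  have ne: "cs \<noteq> []" using cs(1) by auto
  have "adj A (rotate j cs ! i) (rotate j cs ! ((i + 1) mod ?L))" if i: "i < ?L" for i
  proof -
    have "(j + (i + 1) mod ?L) mod ?L = ((j + i) mod ?L + 1) mod ?L"
      by (metis add.assoc mod_add_left_eq mod_add_right_eq)
    moreover have "(i + 1) mod ?L < ?L" using i by (intro mod_less_divisor) linarith
    moreover have "(j + i) mod ?L < ?L" using ne by simp
    ultimately show ?thesis using adj[of "(j + i) mod ?L"] i by (simp add: nth_rotate)
  qed
  moreover have "rotate j cs ! 0 = v" using j ne by (simp add: nth_rotate)
  ultimately show ?thesis using cs that[of "rotate j cs"] by simp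
qed

lemma on_cycle_neighbours_connected:
  assumes og: "oriented_graph V A" and "on_cycle V A v"
  obtains a b where "adj A v a" "adj A v b" "a \<noteq> b"
    "connected_in (V - {v}) (del_verts_arcs V A {v}) a b"
proof -
  obtain cs where L: "length cs \<ge> 3" and dist: "distinct cs" and sub: "set cs \<subseteq> V"
    and v: "cs ! 0 = v" and adj: "\<And>i. i < length cs \<Longrightarrow> adj A (cs ! i) (cs ! ((i + 1) mod length cs))"
    using on_cycle_rotated[OF assms(2)] by blast
  let ?L = "length cs"
  have ne: "cs \<noteq> []" using L by auto
  have inner: "cs ! i \<in> V - {v}" if "0 < i" "i < ?L" for i
    using that v sub nth_eq_iff_index_eq[OF dist, of i 0] nth_mem[of i cs] by fastforce
  have "adj A v (cs ! 1)" using adj[of 0] L v by (simp add: ne)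
  moreover have "Suc (?L - 1) = ?L" using L by simp
  then have "adj A v (cs ! (?L - 1))" using adj[of "?L - 1"] L v by (simp add: adj_commute)
  moreover have "cs ! 1 \<noteq> cs ! (?L - 1)" using L dist by (simp add: nth_eq_iff_index_eq)
  moreover have "connected_in (V - {v}) (del_verts_arcs V A {v}) (cs ! Suc 0) (cs ! Suc (?L - 2))"
  proof (rule connected_in_walk[where f = "\<lambda>i. cs ! Suc i"])
    fix i assume "i < ?L - 2"
    then show "cs ! Suc i \<in> V - {v} \<and> cs ! Suc (Suc i) \<in> V - {v} \<and>
        adj (del_verts_arcs V A {v}) (cs ! Suc i) (cs ! Suc (Suc i))"
      using adj[of "Suc i"] inner[of "Suc i"] inner[of "Suc (Suc i)"]
      by (simp add: adj_del_verts_arcs[OF og])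
  qed
  ultimately show ?thesis using that L by (simp add: Suc_diff_Suc numeral_2_eq_2)
qed

lemma dim_d_del_cycle_vertex:
  assumes og: "oriented_graph V A" and v: "v \<in> V" and cyc: "on_cycle V A v"
  shows "dim_d (V - {v}) (del_verts_arcs V A {v}) + 1 \<le> dim_d V A"
proof -
  define N where "N = {w \<in> V. adj A v w}"
  define cls where "cls n = component_rel (V - {v}) (del_verts_arcs V A {v}) `` {n}" for n
  obtain a b where ab: "adj A v a" "adj A v b" "a \<noteq> b"
    and conn: "connected_in (V - {v}) (del_verts_arcs V A {v}) a b"
    using on_cycle_neighbours_connected[OF og cyc] by blast
  have a: "a \<in> N" and b: "b \<in> N - {a}"
    using ab oriented_graph_adjD[OF og] unfolding N_def by auto
  have "a \<in> V - {v}" "b \<in> V - {v}" using ab oriented_graph_adjD[OF og] by auto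
  then have "(a, b) \<in> component_rel (V - {v}) (del_verts_arcs V A {v})"
    using conn unfolding component_rel_def by simp
  then have "cls a = cls b" unfolding cls_def by (rule equiv_class_eq[OF equiv_component_rel])
  then have "cls ` N = cls ` (N - {a})"
    using a b by (metis Diff_iff image_insert insert_Diff insert_absorb)
  moreover have "finite N" using og unfolding N_def oriented_graph_def by simp
  ultimately have "card (cls ` N) \<le> card N - 1"
    using a card_image_le[of "N - {a}" cls] by simp
  moreover have "card N \<ge> 1" using a \<open>finite N\<close> by (metis One_nat_def Suc_leI card_gt_0_iff empty_iff)
  ultimately have "card (cls ` N) + 1 \<le> degree V A v" unfolding degree_def N_def by linarith
  then show ?thesis using dim_d_del_vertex_bound[OF og v] unfolding cls_def N_def by linarith
qed

section \<open>Independence number\<close>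

lemma finite_independent_sets: "finite V \<Longrightarrow> finite {S. independent_set V A S}"
  unfolding independent_set_def by (rule finite_subset[of _ "Pow V"]) auto

lemma card_le_independence_number:
  assumes "finite V" and "independent_set V A S"
  shows "card S \<le> independence_number V A"
  unfolding independence_number_def
  using assms(2) finite_imageI[OF finite_independent_sets[OF assms(1)], of card A] by simp

lemma independence_number_attained:
  assumes "finite V"
  obtains S where "independent_set V A S" "card S = independence_number V A"
proof -
  have "{} \<in> {S. independent_set V A S}" unfolding independent_set_def by simp
  then have "independence_number V A \<in> card ` {S. independent_set V A S}"
    unfolding independence_number_def
    using finite_imageI[OF finite_independent_sets[OF assms], of card A] by (intro Max_in) auto
  then obtain S where "independent_set V A S" "independence_number V A = card S" by auto
  then show ?thesis using that by simp
qed

lemma independence_number_del_verts_le: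
  assumes og: "oriented_graph V A"
  shows "independence_number (V - D) (del_verts_arcs V A D) \<le> independence_number V A"
proof -
  have finV: "finite V" using og unfolding oriented_graph_def by simp
  obtain S where S: "independent_set (V - D) (del_verts_arcs V A D) S"
    "card S = independence_number (V - D) (del_verts_arcs V A D)"
    using independence_number_attained[of "V - D"] finV by blast
  have "\<not> adj A u w" if "u \<in> S" "w \<in> S" for u w
  proof -
    have "u \<in> V - D" "w \<in> V - D" using S(1) that unfolding independent_set_def by auto
    then show ?thesis
      using S(1) that adj_del_verts_arcs[OF og, of D u w] unfolding independent_set_def by simp
  qed
  then have "independent_set V A S"
    using S(1) unfolding independent_set_def by auto
  then show ?thesis using S(2) card_le_independence_number[OF finV] by metis
qed

lemma independence_number_del_closed_neighbourhood:
  assumes og: "oriented_graph V A" and y: "y \<in> V" "y \<in> D" and nbrs: "\<And>u. adj A y u \<Longrightarrow> u \<in> D"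
  shows "independence_number (V - D) (del_verts_arcs V A D) + 1 \<le> independence_number V A"
proof -
  have finV: "finite V" using og unfolding oriented_graph_def by simp
  obtain S where S: "independent_set (V - D) (del_verts_arcs V A D) S"
    "card S = independence_number (V - D) (del_verts_arcs V A D)"
    using independence_number_attained[of "V - D"] finV by blast
  have SV: "S \<subseteq> V - D" using S(1) unfolding independent_set_def by simp
  have indepS: "\<not> adj A u w" if "u \<in> S" "w \<in> S" for u w
  proof -
    have "u \<in> V - D" "w \<in> V - D" using SV that by auto
    then show ?thesis
      using S(1) that adj_del_verts_arcs[OF og, of D u w] unfolding independent_set_def by simp
  qed
  have y_isolated: "\<not> adj A y w" if "w \<in> insert y S" for w
  proof
    assume yw: "adj A y w"
    then have "w \<noteq> y" using oriented_graph_adjD[OF og] by blast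
    then show False using that yw nbrs SV by blast
  qed
  have "\<not> adj A u w" if "u \<in> insert y S" "w \<in> insert y S" for u w
    using that indepS y_isolated adj_commute by (metis insertE)
  then have "independent_set V A (insert y S)" using SV y unfolding independent_set_def by blast
  moreover have "y \<notin> S" using SV y by blast
  then have "card (insert y S) = card S + 1" using finite_subset[OF SV] finV by simp
  ultimately show ?thesis using S(2) card_le_independence_number[OF finV] by metis
qed

section \<open>Skew rank\<close>

context vec_space
begin

lemma lincomb_col_image_index:
  assumes M: "M \<in> carrier_mat n nc" and J: "J \<subseteq> {..<nc}" and inj: "inj_on (col M) J"
    and i: "i < n"
  shows "lincomb a (col M ` J) $ i = (\<Sum>j\<in>J. a (col M j) * M $$ (i, j))"
proof -
  have "col M ` J \<subseteq> carrier_vec n" using M by auto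
  then have "lincomb a (col M ` J) $ i = (\<Sum>x\<in>col M ` J. a x * x $ i)"
    by (rule lincomb_index[OF i])
  also have "\<dots> = (\<Sum>j\<in>J. a (col M j) * M $$ (i, j))"
    using inj J M i by (simp add: sum.reindex subset_iff)
  finally show ?thesis .
qed

lemma inj_on_col_if_cols_independent:
  fixes M :: "'a mat"
  assumes M: "M \<in> carrier_mat n nc" and J: "J \<subseteq> {..<nc}"
    and indep: "\<And>c. (\<And>i. i < n \<Longrightarrow> (\<Sum>j\<in>J. c j * M $$ (i, j)) = 0) \<Longrightarrow> \<forall>j\<in>J. c j = 0"
  shows "inj_on (col M) J"
proof
  fix j1 j2 assume j: "j1 \<in> J" "j2 \<in> J" and eq: "col M j1 = col M j2"
  define c :: "nat \<Rightarrow> 'a" where "c j = (if j = j1 then 1 else 0) - (if j = j2 then 1 else 0)" for j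
  have zero: "(\<Sum>j\<in>J. c j * M $$ (i, j)) = 0" if "i < n" for i
  proof -
    have "j1 < nc" "j2 < nc" "dim_row M = n" "dim_col M = nc" using j J M by auto
    then have "M $$ (i, j1) = M $$ (i, j2)"
      using arg_cong[OF eq, of "\<lambda>x. x $ i"] that by simp
    moreover have "c j * M $$ (i, j) = (if j = j1 then M $$ (i, j) else 0) - (if j = j2 then M $$ (i, j) else 0)"
      for j by (simp add: c_def left_diff_distrib)
    moreover have "finite J" using J finite_subset by blast
    ultimately show ?thesis using j by (simp add: sum_subtractf sum.delta)
  qed
  show "j1 = j2"
  proof (rule ccontr)
    assume "j1 \<noteq> j2"
    then have "c j1 = 1" by (simp add: c_def)
    moreover have "c j1 = 0" using indep[of c] zero j by blast
    ultimately show False by simp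
  qed
qed

lemma card_le_rank_if_cols_independent:
  assumes M: "M \<in> carrier_mat n nc" and J: "J \<subseteq> {..<nc}"
    and indep: "\<And>c. (\<And>i. i < n \<Longrightarrow> (\<Sum>j\<in>J. c j * M $$ (i, j)) = 0) \<Longrightarrow> \<forall>j\<in>J. c j = 0"
  shows "card J \<le> rank M"
proof -
  have inj: "inj_on (col M) J" using inj_on_col_if_cols_independent[OF M J indep] .
  have indpt: "lin_indpt (col M ` J)"
  proof
    assume dep: "lin_dep (col M ` J)"
    have "finite (col M ` J)" "col M ` J \<subseteq> carrier_vec n" using J M finite_subset by auto
    from finite_lin_dep[OF this(1) dep this(2)]
    obtain a w where a: "lincomb a (col M ` J) = 0\<^sub>v n" and w: "w \<in> col M ` J" "a w \<noteq> 0"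
      by auto
    have "(\<Sum>j\<in>J. (a \<circ> col M) j * M $$ (i, j)) = 0" if "i < n" for i
      using lincomb_col_image_index[OF M J inj that, of a] a that by simp
    then have "\<forall>j\<in>J. a (col M j) = 0" using indep[of "a \<circ> col M"] by simp
    then show False using w by blast
  qed
  have "col M ` J \<subseteq> set (cols M)" using J M by (auto simp: cols_def)
  then have "card (col M ` J) \<le> rank M" by (rule rank_ge_card_indpt[OF M _ indpt])
  then show ?thesis using inj by (simp add: card_image)
qed

lemma rank_cols_independent_witness:
  assumes M: "M \<in> carrier_mat n nc"
  obtains J where "J \<subseteq> {..<nc}" "card J = rank M"
    "\<And>c. (\<And>i. i < n \<Longrightarrow> (\<Sum>j\<in>J. c j * M $$ (i, j)) = 0) \<Longrightarrow> \<forall>j\<in>J. c j = 0"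
proof -
  let ?P = "\<lambda>T. T \<subseteq> set (cols M) \<and> lin_indpt T"
  have "?P {}" by (simp add: lin_dep_def)
  from maximal_exists_superset[of "set (cols M)" ?P, OF _ _ this]
  obtain S where S: "maximal S ?P" by auto
  have SM: "S \<subseteq> set (cols M)" and indpt: "lin_indpt S" using S unfolding maximal_def by auto
  define idx where "idx s = (SOME j. j < nc \<and> col M j = s)" for s
  have idx: "idx s < nc \<and> col M (idx s) = s" if "s \<in> S" for s
  proof -
    have "s \<in> col M ` {0..<nc}" using SM that M by (auto simp: cols_def)
    then have "\<exists>j. j < nc \<and> col M j = s" by auto
    then show ?thesis unfolding idx_def by (rule someI_ex)
  qed
  define J where "J = idx ` S"
  have J: "J \<subseteq> {..<nc}" unfolding J_def using idx by auto
  have injS: "inj_on idx S" using idx by (metis inj_onI)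
  have inj: "inj_on (col M) J" unfolding J_def using idx by (intro inj_onI) auto
  have SJ: "col M ` J = S" unfolding J_def image_image using idx by simp
  have indep: "\<forall>j\<in>J. c j = 0" if zero: "\<And>i. i < n \<Longrightarrow> (\<Sum>j\<in>J. c j * M $$ (i, j)) = 0" for c
  proof (rule ccontr)
    assume "\<not> (\<forall>j\<in>J. c j = 0)"
    then obtain s where s: "s \<in> S" "c (idx s) \<noteq> 0" unfolding J_def by auto
    have "lincomb (c \<circ> idx) S $ i = 0" if "i < n" for i
    proof -
      have "(\<Sum>j\<in>J. (c \<circ> idx) (col M j) * M $$ (i, j)) = (\<Sum>j\<in>J. c j * M $$ (i, j))"
        using idx unfolding J_def by (intro sum.cong) auto
      then show ?thesis using lincomb_col_image_index[OF M J inj that, of "c \<circ> idx"] zero[OF that] SJ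
        by simp
    qed
    moreover have "lincomb (c \<circ> idx) S \<in> carrier_vec n"
      using SM M by (intro lincomb_closed) (auto simp: cols_def)
    ultimately have "lincomb (c \<circ> idx) S = 0\<^sub>v n" by (intro eq_vecI) auto
    then have "lin_dep S"
      using s SM M finite_subset[OF SM] by (intro lin_dep_crit[where A = S and S = S and a = "c \<circ> idx" and v = s]) auto
    then show False using indpt by simp
  qed
  have "card J = rank M"
    using rank_card_indpt[OF M S] injS unfolding J_def by (simp add: card_image)
  then show ?thesis using indep by (rule that[OF J])
qed

end

definition independent_skew_columns :: "'a set \<Rightarrow> ('a \<times> 'a) set \<Rightarrow> 'a set \<Rightarrow> bool" where
  "independent_skew_columns V A U \<longleftrightarrow>
     (\<forall>c. (\<forall>w\<in>V. (\<Sum>u\<in>U. c u * skew_entry A w u) = 0) \<longrightarrow> (\<forall>u\<in>U. c u = 0))"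

lemma skew_entry_eq_0_iff: "skew_entry A u w = 0 \<longleftrightarrow> \<not> adj A u w"
  unfolding skew_entry_def adj_def by auto

lemma sum_skew_entry_del_verts:
  assumes "w \<in> V - D" and "U \<subseteq> V - D"
  shows "(\<Sum>u\<in>U. c u * skew_entry (del_verts_arcs V A D) w u) = (\<Sum>u\<in>U. c u * skew_entry A w u)"
  using assms unfolding skew_entry_def del_verts_arcs_def by (intro sum.cong) auto

lemma skew_adj_mat_carrier: "skew_adj_mat V A \<in> carrier_mat (card V) (card V)"
  unfolding skew_adj_mat_def by simp

lemma bij_betw_nth_sorted_list_of_set:
  "finite V \<Longrightarrow> bij_betw ((!) (sorted_list_of_set V)) {..<card V} V"
  by (intro bij_betw_nth) auto

lemma sum_skew_adj_mat_row:
  assumes "finite V" and J: "J \<subseteq> {..<card V}" and i: "i < card V"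
  defines "\<sigma> \<equiv> (!) (sorted_list_of_set V)"
  shows "(\<Sum>j\<in>J. f (\<sigma> j) * skew_adj_mat V A $$ (i, j)) = (\<Sum>u\<in>\<sigma> ` J. f u * skew_entry A (\<sigma> i) u)"
proof -
  have "inj_on \<sigma> J"
    using bij_betw_nth_sorted_list_of_set[OF assms(1)] J unfolding \<sigma>_def bij_betw_def
    by (blast intro: inj_on_subset)
  then show ?thesis
    using J i by (simp add: sum.reindex skew_adj_mat_def \<sigma>_def subset_iff)
qed

lemma independent_skew_columns_iff_cols:
  assumes finV: "finite V" and J: "J \<subseteq> {..<card V}"
  defines "\<sigma> \<equiv> (!) (sorted_list_of_set V)"
  shows "independent_skew_columns V A (\<sigma> ` J) \<longleftrightarrow>
    (\<forall>c. (\<forall>i<card V. (\<Sum>j\<in>J. c j * skew_adj_mat V A $$ (i, j)) = 0) \<longrightarrow> (\<forall>j\<in>J. c j = 0))"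
proof
  have bij: "bij_betw \<sigma> {..<card V} V" unfolding \<sigma>_def by (rule bij_betw_nth_sorted_list_of_set[OF finV])
  note row = sum_skew_adj_mat_row[OF finV J, folded \<sigma>_def]
  assume indep: "independent_skew_columns V A (\<sigma> ` J)"
  show "\<forall>c. (\<forall>i<card V. (\<Sum>j\<in>J. c j * skew_adj_mat V A $$ (i, j)) = 0) \<longrightarrow> (\<forall>j\<in>J. c j = 0)"
  proof (intro allI impI)
    fix c assume zero: "\<forall>i<card V. (\<Sum>j\<in>J. c j * skew_adj_mat V A $$ (i, j)) = 0"
    define f where "f = c \<circ> inv_into {..<card V} \<sigma>"
    have f: "f (\<sigma> j) = c j" if "j \<in> J" for j
      using that J bij unfolding f_def bij_betw_def by (auto simp: inv_into_f_f subset_iff)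
    have "(\<Sum>u\<in>\<sigma> ` J. f u * skew_entry A w u) = 0" if "w \<in> V" for w
    proof -
      have "w \<in> \<sigma> ` {..<card V}" using bij that unfolding bij_betw_def by simp
      then obtain i where i: "i < card V" "w = \<sigma> i" by auto
      have "(\<Sum>j\<in>J. f (\<sigma> j) * skew_adj_mat V A $$ (i, j)) = (\<Sum>j\<in>J. c j * skew_adj_mat V A $$ (i, j))"
        using f by (intro sum.cong) auto
      then show ?thesis using row[OF i(1), of f A] zero i by simp
    qed
    then show "\<forall>j\<in>J. c j = 0" using indep f unfolding independent_skew_columns_def by fastforce
  qed
next
  note row = sum_skew_adj_mat_row[OF finV J, folded \<sigma>_def]
  assume indep: "\<forall>c. (\<forall>i<card V. (\<Sum>j\<in>J. c j * skew_adj_mat V A $$ (i, j)) = 0) \<longrightarrow> (\<forall>j\<in>J. c j = 0)"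
  show "independent_skew_columns V A (\<sigma> ` J)" unfolding independent_skew_columns_def
  proof (intro allI impI)
    fix c assume zero: "\<forall>w\<in>V. (\<Sum>u\<in>\<sigma> ` J. c u * skew_entry A w u) = 0"
    have "\<sigma> i \<in> V" if "i < card V" for i
      using that finV unfolding \<sigma>_def by (metis length_sorted_list_of_set nth_mem set_sorted_list_of_set)
    then have "\<forall>i<card V. (\<Sum>j\<in>J. (c \<circ> \<sigma>) j * skew_adj_mat V A $$ (i, j)) = 0"
      using row zero by simp
    then show "\<forall>u\<in>\<sigma> ` J. c u = 0" using indep by auto
  qed
qed

lemma card_le_skew_rank:
  assumes finV: "finite V" and "U \<subseteq> V" and "independent_skew_columns V A U"
  shows "card U \<le> skew_rank V A"
proof -
  define \<sigma> where "\<sigma> = (!) (sorted_list_of_set V)"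
  have bij: "bij_betw \<sigma> {..<card V} V" unfolding \<sigma>_def by (rule bij_betw_nth_sorted_list_of_set[OF finV])
  define J where "J = inv_into {..<card V} \<sigma> ` U"
  have J: "J \<subseteq> {..<card V}" unfolding J_def
  proof (rule image_subsetI)
    fix u assume "u \<in> U"
    then have "u \<in> \<sigma> ` {..<card V}" using bij assms(2) unfolding bij_betw_def by blast
    then show "inv_into {..<card V} \<sigma> u \<in> {..<card V}" by (rule inv_into_into)
  qed
  have UJ: "\<sigma> ` J = U" unfolding J_def using bij assms(2)
    by (simp add: bij_betw_def image_inv_into_cancel)
  have "card J = card U" unfolding J_def using bij assms(2)
    by (intro card_image inj_on_inv_into) (auto simp: bij_betw_def)
  moreover have "card J \<le> skew_rank V A"
    unfolding skew_rank_def
    using assms(3) independent_skew_columns_iff_cols[OF finV J, of A] UJ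
    by (intro vec_space.card_le_rank_if_cols_independent[OF skew_adj_mat_carrier J])
       (simp add: \<sigma>_def)
  ultimately show ?thesis by simp
qed

lemma skew_rank_witness:
  assumes finV: "finite V"
  obtains U where "U \<subseteq> V" "card U = skew_rank V A" "independent_skew_columns V A U"
proof -
  define \<sigma> where "\<sigma> = (!) (sorted_list_of_set V)"
  have bij: "bij_betw \<sigma> {..<card V} V" unfolding \<sigma>_def by (rule bij_betw_nth_sorted_list_of_set[OF finV])
  obtain J where J: "J \<subseteq> {..<card V}" and card: "card J = skew_rank V A"
    and indep: "\<And>c. (\<And>i. i < card V \<Longrightarrow> (\<Sum>j\<in>J. c j * skew_adj_mat V A $$ (i, j)) = 0) \<Longrightarrow>
      \<forall>j\<in>J. c j = 0"
    using vec_space.rank_cols_independent_witness[OF skew_adj_mat_carrier] unfolding skew_rank_def by blast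
  have "\<sigma> ` J \<subseteq> V" using bij J unfolding bij_betw_def by auto
  moreover have "card (\<sigma> ` J) = skew_rank V A"
    using inj_on_subset[of \<sigma> "{..<card V}" J] bij J card unfolding bij_betw_def
    by (simp add: card_image)
  moreover have "independent_skew_columns V A (\<sigma> ` J)"
    using independent_skew_columns_iff_cols[OF finV J, of A] indep unfolding \<sigma>_def by blast
  ultimately show ?thesis by (rule that)
qed

lemma skew_rank_del_verts_le:
  assumes og: "oriented_graph V A"
  shows "skew_rank (V - D) (del_verts_arcs V A D) \<le> skew_rank V A"
proof -
  have finV: "finite V" using og unfolding oriented_graph_def by simp
  obtain U where U: "U \<subseteq> V - D" "card U = skew_rank (V - D) (del_verts_arcs V A D)"
    and indep: "independent_skew_columns (V - D) (del_verts_arcs V A D) U"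
    using skew_rank_witness[of "V - D"] finV by blast
  have "independent_skew_columns V A U"
    using indep sum_skew_entry_del_verts[OF _ U(1)] unfolding independent_skew_columns_def by auto
  moreover have "U \<subseteq> V" using U(1) by blast
  ultimately show ?thesis using card_le_skew_rank[OF finV] U(2) by metis
qed

lemma independent_skew_columns_insert_pendant_edge:
  assumes og: "oriented_graph V A" and y: "y \<in> V" and yx: "adj A y x"
    and nbr: "\<And>u. adj A y u \<Longrightarrow> u = x" and U: "U \<subseteq> V - {y, x}"
    and indep: "independent_skew_columns (V - {y, x}) (del_verts_arcs V A {y, x}) U"
  shows "independent_skew_columns V A (insert x (insert y U))"
  unfolding independent_skew_columns_def
proof (intro allI impI)
  fix c assume zero: "\<forall>w\<in>V. (\<Sum>u\<in>insert x (insert y U). c u * skew_entry A w u) = 0"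
  have x: "x \<in> V" and xy: "x \<noteq> y" using oriented_graph_adjD[OF og yx] by auto
  have finU: "finite U" using U og unfolding oriented_graph_def by (auto intro: finite_subset)
  have row: "(\<Sum>u\<in>insert x (insert y U). c u * skew_entry A w u) =
      c x * skew_entry A w x + c y * skew_entry A w y + (\<Sum>u\<in>U. c u * skew_entry A w u)" for w
  proof -
    have "x \<notin> insert y U" "y \<notin> U" using U xy by auto
    then show ?thesis using finU by (simp add: add.assoc)
  qed
  have loop: "skew_entry A w w = 0" for w
    using oriented_graph_adjD[OF og, of w w] by (auto simp: skew_entry_eq_0_iff)
  have "skew_entry A y u = 0" if "u \<in> U" for u
    using that U nbr by (auto simp: skew_entry_eq_0_iff)
  then have "c x * skew_entry A y x = 0" using zero y row[of y] loop by simp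
  then have cx: "c x = 0" using yx by (simp add: skew_entry_eq_0_iff)
  have "(\<Sum>u\<in>U. c u * skew_entry (del_verts_arcs V A {y, x}) w u) = 0" if w: "w \<in> V - {y, x}" for w
  proof -
    have "skew_entry A w y = 0" using w nbr by (auto simp: skew_entry_eq_0_iff adj_commute)
    then show ?thesis using zero w row[of w] cx sum_skew_entry_del_verts[OF w U] by simp
  qed
  then have cU: "\<forall>u\<in>U. c u = 0" using indep unfolding independent_skew_columns_def by blast
  then have "c y * skew_entry A x y = 0" using zero x row[of x] cx loop by simp
  then have "c y = 0" using yx by (simp add: skew_entry_eq_0_iff adj_commute)
  then show "\<forall>u\<in>insert x (insert y U). c u = 0" using cx cU by simp
qed

lemma skew_rank_del_pendant_edge:
  assumes og: "oriented_graph V A" and y: "y \<in> V" and yx: "adj A y x"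
    and nbr: "\<And>u. adj A y u \<Longrightarrow> u = x"
  shows "skew_rank (V - {y, x}) (del_verts_arcs V A {y, x}) + 2 \<le> skew_rank V A"
proof -
  have finV: "finite V" using og unfolding oriented_graph_def by simp
  have x: "x \<in> V" and xy: "x \<noteq> y" using oriented_graph_adjD[OF og yx] by auto
  obtain U where U: "U \<subseteq> V - {y, x}" "card U = skew_rank (V - {y, x}) (del_verts_arcs V A {y, x})"
    and indep: "independent_skew_columns (V - {y, x}) (del_verts_arcs V A {y, x}) U"
    using skew_rank_witness[of "V - {y, x}"] finV by blast
  have "x \<notin> insert y U" "y \<notin> U" using U(1) xy by auto
  then have "card (insert x (insert y U)) = card U + 2"
    using finite_subset[OF U(1)] finV by simp
  moreover have "insert x (insert y U) \<subseteq> V" using U(1) x y by auto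
  ultimately show ?thesis
    using card_le_skew_rank[OF finV _ independent_skew_columns_insert_pendant_edge[OF og y yx nbr U(1) indep]]
      U(2) by simp
qed

section \<open>The lower bound\<close>

definition simple_path :: "'a set \<Rightarrow> ('a \<times> 'a) set \<Rightarrow> 'a list \<Rightarrow> bool" where
  "simple_path V A p \<longleftrightarrow>
     distinct p \<and> set p \<subseteq> V \<and> (\<forall>i. Suc i < length p \<longrightarrow> adj A (p ! i) (p ! Suc i))"

lemma simple_path_Cons:
  assumes "simple_path V A p" and "w \<in> V" and "w \<notin> set p" and "p \<noteq> [] \<Longrightarrow> adj A w (p ! 0)"
  shows "simple_path V A (w # p)"
  using assms unfolding simple_path_def by (auto simp: nth_Cons split: nat.split)

lemma longest_simple_path_exists:
  assumes "finite V" and "v \<in> V"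
  obtains p where "p \<noteq> []" "simple_path V A p" "\<forall>q. simple_path V A q \<longrightarrow> length q \<le> length p"
proof -
  have start: "simple_path V A [v]" using assms(2) unfolding simple_path_def by simp
  have "length q < Suc (card V)" if "simple_path V A q" for q
  proof -
    have "length q = card (set q)" using that unfolding simple_path_def by (simp add: distinct_card)
    also have "\<dots> \<le> card V" using that card_mono[OF assms(1)] unfolding simple_path_def by simp
    finally show ?thesis by simp
  qed
  then obtain p where p: "simple_path V A p" and max: "\<forall>q. simple_path V A q \<longrightarrow> length q \<le> length p"
    using ex_has_greatest_nat[of "simple_path V A" "[v]" length "Suc (card V)", OF start] by auto
  have "p \<noteq> []" using max start by force
  then show ?thesis using p max by (rule that)
qed

lemma simple_path_back_edge_on_cycle:
  assumes "simple_path V A p" and j: "2 \<le> j" "j < length p" and "adj A (p ! j) (p ! 0)"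
  shows "on_cycle V A (p ! 0)"
  unfolding on_cycle_def
proof (intro exI conjI allI impI)
  let ?cs = "take (Suc j) p"
  show "3 \<le> length ?cs" "distinct ?cs" "set ?cs \<subseteq> V"
    using assms set_take_subset[of "Suc j" p] unfolding simple_path_def by auto
  show "p ! 0 \<in> set ?cs" using j by (simp add: in_set_conv_nth) (metis zero_less_Suc nth_take)
  fix i assume "i < length ?cs"
  then have "i \<le> j" using j by simp
  then show "adj A (?cs ! i) (?cs ! ((i + 1) mod length ?cs))"
    using assms unfolding simple_path_def by (cases "i = j") auto
qed

lemma longest_simple_path_start_neighbour:
  assumes p: "simple_path V A p" "p \<noteq> []"
    and longest: "\<forall>q. simple_path V A q \<longrightarrow> length q \<le> length p"
    and w: "w \<in> V" "adj A (p ! 0) w"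
  shows "w \<in> set p"
proof (rule ccontr)
  assume "w \<notin> set p"
  then have "simple_path V A (w # p)"
    using p w by (intro simple_path_Cons) (auto simp: adj_commute)
  then show False using longest by fastforce
qed

lemma exists_vertex_degree_le_1_or_on_cycle:
  assumes og: "oriented_graph V A" and "V \<noteq> {}"
  obtains u where "u \<in> V" "degree V A u \<le> 1 \<or> on_cycle V A u"
proof -
  have finV: "finite V" using og unfolding oriented_graph_def by simp
  obtain v where v: "v \<in> V" using assms(2) by blast
  obtain p where p: "p \<noteq> []" "simple_path V A p"
    and longest: "\<forall>q. simple_path V A q \<longrightarrow> length q \<le> length p"
    by (rule longest_simple_path_exists[OF finV v])
  define N where "N = {w \<in> V. adj A (p ! 0) w}"
  have u: "p ! 0 \<in> V" using p unfolding simple_path_def by auto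
  show ?thesis
  proof (cases "degree V A (p ! 0) \<le> 1")
    case True
    then show ?thesis using u by (intro that) auto
  next
    case False
    then have "\<not> N \<subseteq> {p ! 1}" using card_mono[of "{p ! 1}" N] unfolding degree_def N_def by auto
    then obtain w where w: "w \<in> N" "w \<noteq> p ! 1" by blast
    then have "w \<in> set p"
      using longest_simple_path_start_neighbour[OF p(2,1) longest] unfolding N_def by blast
    then obtain j where j: "j < length p" "p ! j = w" by (meson in_set_conv_nth)
    have "j \<noteq> 0"
    proof
      assume "j = 0"
      then show False using j w oriented_graph_adjD[OF og, of "p ! 0" "p ! 0"] unfolding N_def by simp
    qed
    moreover have "j \<noteq> 1" using j w by auto
    ultimately have "2 \<le> j" by linarith
    moreover have "adj A (p ! j) (p ! 0)" using j w unfolding N_def by (simp add: adj_commute)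
    ultimately show ?thesis using u simple_path_back_edge_on_cycle[OF p(2) _ j(1)] by (intro that) auto
  qed
qed

lemma pendant_not_on_cycle:
  assumes og: "oriented_graph V A" and "pendant V A y"
  shows "\<not> on_cycle V A y"
proof
  assume "on_cycle V A y"
  then obtain a b where "adj A y a" "adj A y b" "a \<noteq> b"
    using on_cycle_neighbours_connected[OF og] by blast
  then show False using pendant_neighbour_unique[OF og assms(2)] by blast
qed

lemma on_cycle_del_vertex:
  assumes og: "oriented_graph V A" and "on_cycle V A x" and "\<not> on_cycle V A y"
  shows "on_cycle (V - {y}) (del_verts_arcs V A {y}) x"
proof -
  obtain cs where cs: "length cs \<ge> 3" "distinct cs" "set cs \<subseteq> V" "x \<in> set cs"
    and adj: "\<forall>i < length cs. adj A (cs ! i) (cs ! ((i + 1) mod length cs))"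
    using assms(2) unfolding on_cycle_def by blast
  have "y \<notin> set cs" using assms(3) cs adj unfolding on_cycle_def by blast
  then have sub: "set cs \<subseteq> V - {y}" using cs(3) by blast
  have "adj (del_verts_arcs V A {y}) (cs ! i) (cs ! ((i + 1) mod length cs))" if "i < length cs" for i
  proof -
    have "(i + 1) mod length cs < length cs" using that by (intro mod_less_divisor) linarith
    then show ?thesis using that adj sub nth_mem adj_del_verts_arcs[OF og] by (metis subsetD)
  qed
  then show ?thesis unfolding on_cycle_def using cs sub by blast
qed

lemma del_verts_arcs_pair:
  "del_verts_arcs (V - {y}) (del_verts_arcs V A {y}) {x} = del_verts_arcs V A {y, x}"
  "V - {y} - {x} = V - {y, x}"
  unfolding del_verts_arcs_def by auto

lemma dim_d_del_edge_le:
  assumes og: "oriented_graph V A" and "adj A y x"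
  shows "dim_d (V - {y, x}) (del_verts_arcs V A {y, x}) \<le> dim_d V A"
proof -
  have y: "y \<in> V" and x: "x \<in> V - {y}" using oriented_graph_adjD[OF og assms(2)] by auto
  have "dim_d (V - {y} - {x}) (del_verts_arcs (V - {y}) (del_verts_arcs V A {y}) {x})
      \<le> dim_d (V - {y}) (del_verts_arcs V A {y})"
    by (rule dim_d_del_vertex_le[OF oriented_graph_del_verts[OF og] x])
  also have "\<dots> \<le> dim_d V A" by (rule dim_d_del_vertex_le[OF og y])
  finally show ?thesis unfolding del_verts_arcs_pair .
qed

lemma dim_d_del_pendant_edge_on_cycle:
  assumes og: "oriented_graph V A" and "pendant V A y" and "adj A y x" and "on_cycle V A x"
  shows "dim_d (V - {y, x}) (del_verts_arcs V A {y, x}) + 1 \<le> dim_d V A"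
proof -
  have y: "y \<in> V" and x: "x \<in> V - {y}" using oriented_graph_adjD[OF og assms(3)] by auto
  have "on_cycle (V - {y}) (del_verts_arcs V A {y}) x"
    using on_cycle_del_vertex[OF og assms(4) pendant_not_on_cycle[OF og assms(2)]] .
  then have "dim_d (V - {y} - {x}) (del_verts_arcs (V - {y}) (del_verts_arcs V A {y}) {x}) + 1
      \<le> dim_d (V - {y}) (del_verts_arcs V A {y})"
    by (rule dim_d_del_cycle_vertex[OF oriented_graph_del_verts[OF og] x])
  also have "\<dots> \<le> dim_d V A" by (rule dim_d_del_vertex_le[OF og y])
  finally show ?thesis unfolding del_verts_arcs_pair .
qed

definition excess :: "'a::linorder set \<Rightarrow> ('a \<times> 'a) set \<Rightarrow> int" where
  "excess V A = int (skew_rank V A) + 2 * int (independence_number V A) -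
     (2 * int (card V) - 2 * dim_d V A)"

lemma lower_optimal_iff_excess_eq_0: "lower_optimal V A \<longleftrightarrow> excess V A = 0"
  unfolding lower_optimal_def excess_def by linarith

lemma excess_del_isolated_vertex:
  assumes og: "oriented_graph V A" and u: "u \<in> V" and "degree V A u = 0"
  shows "excess (V - {u}) (del_verts_arcs V A {u}) \<le> excess V A"
proof -
  have finV: "finite V" using og unfolding oriented_graph_def by simp
  have "{w \<in> V. adj A u w} = {}" using assms(3) finV unfolding degree_def by simp
  then have "\<not> adj A u w" for w using oriented_graph_adjD[OF og, of u w] by blast
  then have "independence_number (V - {u}) (del_verts_arcs V A {u}) + 1 \<le> independence_number V A"
    by (intro independence_number_del_closed_neighbourhood[OF og u]) auto
  moreover have "card (V - {u}) + 1 = card V" using finV u by (metis card_Suc_Diff1 Suc_eq_plus1)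
  ultimately show ?thesis
    using skew_rank_del_verts_le[OF og, of "{u}"] dim_d_del_vertex_le[OF og u]
    unfolding excess_def by linarith
qed

lemma excess_del_cycle_vertex:
  assumes og: "oriented_graph V A" and u: "u \<in> V" and "on_cycle V A u"
  shows "excess (V - {u}) (del_verts_arcs V A {u}) \<le> excess V A"
proof -
  have "card (V - {u}) + 1 = card V"
    using og u unfolding oriented_graph_def by (metis card_Suc_Diff1 Suc_eq_plus1)
  then show ?thesis
    using skew_rank_del_verts_le[OF og, of "{u}"] independence_number_del_verts_le[OF og, of "{u}"]
      dim_d_del_cycle_vertex[OF og u assms(3)]
    unfolding excess_def by linarith
qed

lemma excess_del_pendant_edge:
  assumes og: "oriented_graph V A" and "pendant V A y" and yx: "adj A y x"
  shows "excess (V - {y, x}) (del_verts_arcs V A {y, x}) +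
           2 * (dim_d V A - dim_d (V - {y, x}) (del_verts_arcs V A {y, x})) \<le> excess V A"
proof -
  have y: "y \<in> V" and x: "x \<in> V" "x \<noteq> y" using oriented_graph_adjD[OF og yx] by auto
  have nbr: "u = x" if "adj A y u" for u using pendant_neighbour_unique[OF og assms(2) yx that] .
  have "{y, x} \<subseteq> V" "finite V" using og y x unfolding oriented_graph_def by auto
  then have "card (V - {y, x}) + card {y, x} = card V"
    by (metis card_Diff_subset card_mono finite.emptyI finite.insertI le_add_diff_inverse2)
  then have "card (V - {y, x}) + 2 = card V" using x by simp
  moreover have "independence_number (V - {y, x}) (del_verts_arcs V A {y, x}) + 1 \<le> independence_number V A"
    using nbr by (intro independence_number_del_closed_neighbourhood[OF og y]) auto
  moreover have "skew_rank (V - {y, x}) (del_verts_arcs V A {y, x}) + 2 \<le> skew_rank V A"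
    using skew_rank_del_pendant_edge[OF og y yx nbr] .
  ultimately show ?thesis unfolding excess_def by arith
qed

theorem excess_nonneg:
  assumes "oriented_graph V A"
  shows "0 \<le> excess V A"
  using assms
proof (induction "card V" arbitrary: V A rule: less_induct)
  case less
  note og = less.prems
  show ?case
  proof (cases "V = {}")
    case True
    then show ?thesis unfolding excess_def dim_d_def by simp
  next
    case False
    have finV: "finite V" using og unfolding oriented_graph_def by simp
    obtain u where u: "u \<in> V" and "degree V A u \<le> 1 \<or> on_cycle V A u"
      using exists_vertex_degree_le_1_or_on_cycle[OF og False] by blast
    then consider "degree V A u = 0" | "pendant V A u" | "on_cycle V A u"
      unfolding pendant_def by linarith
    then show ?thesis
    proof cases
      case 1
      have "0 \<le> excess (V - {u}) (del_verts_arcs V A {u})"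
        using less.hyps[OF card_Diff1_less[OF finV u] oriented_graph_del_verts[OF og]] .
      then show ?thesis using excess_del_isolated_vertex[OF og u 1] by linarith
    next
      case 2
      then obtain x where x: "adj A u x"
        using finV unfolding pendant_def degree_def by (auto dest!: card_eq_SucD)
      have "card (V - {u, x}) < card V"
        using finV u by (intro psubset_card_mono) auto
      then have "0 \<le> excess (V - {u, x}) (del_verts_arcs V A {u, x})"
        using less.hyps[OF _ oriented_graph_del_verts[OF og]] by blast
      then show ?thesis
        using excess_del_pendant_edge[OF og 2 x] dim_d_del_edge_le[OF og x] by arith
    next
      case 3
      have "0 \<le> excess (V - {u}) (del_verts_arcs V A {u})"
        using less.hyps[OF card_Diff1_less[OF finV u] oriented_graph_del_verts[OF og]] .
      then show ?thesis using excess_del_cycle_vertex[OF og u 3] by linarith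
    qed
  qed
qed

theorem lemma2p6:
  fixes V :: "'a::linorder set" and A :: "('a \<times> 'a) set" and x y :: 'a
  assumes "oriented_graph V A"
    and "lower_optimal V A"
    and "pendant V A y"
    and "x \<in> V" and "adj A y x"
  shows "\<not> on_cycle V A x \<and>
         lower_optimal (V - {y, x}) (del_verts_arcs V A {y, x})"
proof -
  let ?H = "del_verts_arcs V A {y, x}"
  have "excess (V - {y, x}) ?H + 2 * (dim_d V A - dim_d (V - {y, x}) ?H) \<le> 0"
    using excess_del_pendant_edge[OF assms(1,3,5)] assms(2)
    unfolding lower_optimal_iff_excess_eq_0 by simp
  moreover have "0 \<le> excess (V - {y, x}) ?H"
    using excess_nonneg[OF oriented_graph_del_verts[OF assms(1)]] .
  moreover have "dim_d (V - {y, x}) ?H \<le> dim_d V A" using dim_d_del_edge_le[OF assms(1,5)] .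
  ultimately have "excess (V - {y, x}) ?H = 0" and "dim_d (V - {y, x}) ?H = dim_d V A"
    by arith+
  then show ?thesis
    using dim_d_del_pendant_edge_on_cycle[OF assms(1,3,5)]
    unfolding lower_optimal_iff_excess_eq_0 by auto
qed

end
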